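(* Let $k\ge2$ and let $r=(r_{ij})$ be a maximally-connected coupling of the 1-2 system of $(R^1,R^2)$. Suppose $r_{ij}>0$ for some $i\neq j$. If $p_i+p_j\le q_i+q_j$, then $r_{ab}=0$ for all $a\ne b$ with $b\neq j$ (all nonzero off-diagonal entries lie in column $j$). If $p_i+p_j\ge q_i+q_j$, then $r_{ab}=0$ for all $a\ne b$ with $a\neq i$ (all nonzero off-diagonal entries lie in row $i$).
   Context: Let $R^1,R^2$ be two stochastically unrelated random variables with values in $\{1,\dots,k\}$, $\Pr[R^1=i]=p_i$, $\Pr[R^2=i]=q_i$, where $p_i,q_i\ge0$ and $\sum_i p_i=\sum_i q_i=1$. A maximally-connected coupling of the 1-2 system is a $k\times k$ matrix $r=(r_{ij})$ of nonnegative reals such that: $\sum_j r_{ij}=p_i$ and $\sum_i r_{ij}=q_j$ for all $i,j$; $r_{ii}=\min(p_i,q_i)$ for all $i$; and $r_{ii}+r_{ij}+r_{ji}+r_{jj}=\min(p_i+p_j,q_i+q_j)$ for all $i<j$. *)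

theory Defs
  imports Main "HOL.Real"
begin

text \<open>Distributions p, q on {1..k} and a k x k matrix r, all as functions on nat,
only values at indices in {1..k} matter.\<close>

definition is_distr :: "nat \<Rightarrow> (nat \<Rightarrow> real) \<Rightarrow> bool" where
  "is_distr k p \<longleftrightarrow> (\<forall>i\<in>{1..k}. p i \<ge> 0) \<and> (\<Sum>i=1..k. p i) = 1"

definition max_connected_coupling ::
  "nat \<Rightarrow> (nat \<Rightarrow> real) \<Rightarrow> (nat \<Rightarrow> real) \<Rightarrow> (nat \<Rightarrow> nat \<Rightarrow> real) \<Rightarrow> bool" where
  "max_connected_coupling k p q r \<longleftrightarrow>
     (\<forall>i\<in>{1..k}. \<forall>j\<in>{1..k}. r i j \<ge> 0) \<and>
     (\<forall>i\<in>{1..k}. (\<Sum>j=1..k. r i j) = p i) \<and>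
     (\<forall>j\<in>{1..k}. (\<Sum>i=1..k. r i j) = q j) \<and>
     (\<forall>i\<in>{1..k}. r i i = min (p i) (q i)) \<and>
     (\<forall>i\<in>{1..k}. \<forall>j\<in>{1..k}. i < j \<longrightarrow>
        r i i + r i j + r j i + r j j = min (p i + p j) (q i + q j))"

end

theory Submission
  imports Defs
begin

text \<open>If some off-diagonal entry \<open>r a b\<close> is nonzero, the diagonal constraint forces
\<open>q a < p a\<close> and \<open>p b < q b\<close>; for such a pair the 2x2 constraint pins down
\<open>r a b = min (p a - q a) (q b - p b)\<close>. Under \<open>p i + p j \<le> q i + q j\<close> this makes
\<open>r i j = p i - q i\<close>, which exhausts row \<open>i\<close>; any other nonzero entry \<open>r a b\<close> with
\<open>b \<noteq> j\<close> would give \<open>r i b > 0\<close>, a contradiction. The second claim is the first one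
for the transposed coupling.\<close>

lemma sum_nonneg_le_subset_imp_zero:
  fixes f :: "'a \<Rightarrow> 'b::ordered_ab_group_add"
  assumes "finite A" "\<forall>x\<in>A. f x \<ge> 0" "B \<subseteq> A" "sum f A \<le> sum f B" "c \<in> A - B"
  shows "f c = 0"
proof -
  have "sum f A = sum f B + sum f (A - B)"
    using assms(1,3) by (metis add.commute finite_subset sum.subset_diff)
  with assms(4) have "sum f (A - B) \<le> 0"
    by simp
  moreover have "sum f (A - B) \<ge> 0"
    using assms(2) by (intro sum_nonneg) auto
  ultimately have "sum f (A - B) = 0"
    by (rule order.antisym)
  then show ?thesis
    using assms(1,2,5) by (subst (asm) sum_nonneg_eq_0_iff) auto
qed

lemma max_connected_coupling_transpose:
  assumes "max_connected_coupling k p q r"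
  shows "max_connected_coupling k q p (\<lambda>a b. r b a)"
  using assms unfolding max_connected_coupling_def
  by (simp only: min.commute[of "p _" "q _"] min.commute[of "p _ + p _"] add_ac) blast

lemma max_connected_coupling_pair:
  assumes "max_connected_coupling k p q r" "a \<in> {1..k}" "b \<in> {1..k}" "a \<noteq> b"
  shows "r a a + r a b + r b a + r b b = min (p a + p b) (q a + q b)"
proof (cases "a < b")
  case True
  then show ?thesis
    using assms unfolding max_connected_coupling_def by blast
next
  case False
  with assms have "r b b + r b a + r a b + r a a = min (p b + p a) (q b + q a)"
    unfolding max_connected_coupling_def by (metis linorder_neqE_nat)
  then show ?thesis
    by (simp add: algebra_simps)
qed

lemma max_connected_coupling_row_zero:
  assumes "max_connected_coupling k p q r" "a \<in> {1..k}" "b \<in> {1..k}" "a \<noteq> b"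
    and "p a \<le> q a"
  shows "r a b = 0"
proof -
  have "(\<Sum>c\<in>{1..k}. r a c) \<le> sum (r a) {a}"
    using assms unfolding max_connected_coupling_def by auto
  then show ?thesis
    using assms unfolding max_connected_coupling_def
    by (intro sum_nonneg_le_subset_imp_zero[of "{1..k}" "r a" "{a}" b]) auto
qed

lemma max_connected_coupling_offdiag_nonzero:
  assumes "max_connected_coupling k p q r" "a \<in> {1..k}" "b \<in> {1..k}" "a \<noteq> b"
    and "r a b \<noteq> 0"
  shows "q a < p a" "p b < q b"
proof -
  show "q a < p a"
    using max_connected_coupling_row_zero[OF assms(1-4)] assms(5) by force
  show "p b < q b"
    using max_connected_coupling_row_zero[OF max_connected_coupling_transpose[OF assms(1)]
        assms(3,2)] assms(4,5) by force
qed

lemma max_connected_coupling_offdiag_entry: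
  assumes "max_connected_coupling k p q r" "a \<in> {1..k}" "b \<in> {1..k}" "a \<noteq> b"
    and "q a < p a" "p b < q b"
  shows "r a b = min (p a - q a) (q b - p b)"
proof -
  have "r a a = q a" "r b b = p b"
    using assms unfolding max_connected_coupling_def by auto
  moreover have "r b a = 0"
    using max_connected_coupling_row_zero[OF assms(1,3,2)] assms(4,6) by simp
  ultimately have "q a + r a b + p b = min (p a + p b) (q a + q b)"
    using max_connected_coupling_pair[OF assms(1-4)] by simp
  then show ?thesis
    by (simp add: min_def split: if_splits)
qed

lemma max_connected_coupling_offdiag_in_column:
  assumes mcc: "max_connected_coupling k p q r"
    and ij: "i \<in> {1..k}" "j \<in> {1..k}" "i \<noteq> j" "r i j > 0"
    and le: "p i + p j \<le> q i + q j"
    and ab: "a \<in> {1..k}" "b \<in> {1..k}" "a \<noteq> b" "b \<noteq> j"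
  shows "r a b = 0"
proof (rule ccontr)
  assume "r a b \<noteq> 0"
  then have pb: "p b < q b"
    using max_connected_coupling_offdiag_nonzero(2)[OF mcc ab(1-3)] by blast
  have qi: "q i < p i" and pj: "p j < q j"
    using max_connected_coupling_offdiag_nonzero[OF mcc ij(1-3)] ij(4) by auto
  have "r i j = p i - q i"
    using max_connected_coupling_offdiag_entry[OF mcc ij(1-3) qi pj] le by simp
  moreover have "r i i = q i"
    using mcc ij(1) qi unfolding max_connected_coupling_def by auto
  ultimately have "(\<Sum>c\<in>{1..k}. r i c) \<le> sum (r i) {i, j}"
    using mcc ij unfolding max_connected_coupling_def by auto
  moreover have "b \<noteq> i"
    using pb qi by auto
  ultimately have "r i b = 0"
    using mcc ij ab unfolding max_connected_coupling_def
    by (intro sum_nonneg_le_subset_imp_zero[of "{1..k}" "r i" "{i, j}" b]) auto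
  moreover have "r i b = min (p i - q i) (q b - p b)"
    using max_connected_coupling_offdiag_entry[OF mcc ij(1) ab(2) _ qi pb] \<open>b \<noteq> i\<close> by auto
  ultimately show False
    using qi pb by simp
qed

theorem mainTheorem7:
  fixes k :: nat and p q :: "nat \<Rightarrow> real" and r :: "nat \<Rightarrow> nat \<Rightarrow> real"
    and i j :: nat
  assumes "k \<ge> 2"
    and "is_distr k p" and "is_distr k q"
    and "max_connected_coupling k p q r"
    and "i \<in> {1..k}" and "j \<in> {1..k}" and "i \<noteq> j" and "r i j > 0"
  shows "(p i + p j \<le> q i + q j \<longrightarrow>
            (\<forall>a\<in>{1..k}. \<forall>b\<in>{1..k}. a \<noteq> b \<and> b \<noteq> j \<longrightarrow> r a b = 0))
       \<and> (p i + p j \<ge> q i + q j \<longrightarrow>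
            (\<forall>a\<in>{1..k}. \<forall>b\<in>{1..k}. a \<noteq> b \<and> a \<noteq> i \<longrightarrow> r a b = 0))"
proof (intro conjI impI ballI)
  fix a b
  assume "p i + p j \<le> q i + q j" "a \<in> {1..k}" "b \<in> {1..k}" "a \<noteq> b \<and> b \<noteq> j"
  then show "r a b = 0"
    using max_connected_coupling_offdiag_in_column[OF assms(4-8)] by blast
next
  fix a b
  assume "q i + q j \<le> p i + p j" "a \<in> {1..k}" "b \<in> {1..k}" "a \<noteq> b \<and> a \<noteq> i"
  then show "r a b = 0"
    using max_connected_coupling_offdiag_in_column[OF max_connected_coupling_transpose[OF assms(4)],
        of j i b a] assms(5-8) by (simp add: add.commute)
qed

end
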